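(* Let $G$ be a $2$-connected cubic multigraph. For every tombolo-cut $(U,\bar U)$ of $G$, the two edges of its cut-set share no endpoint.
   Context: Multigraphs are finite and loopless, parallel edges allowed. A cut of $G$ is a bipartition $(U,\bar U)$ of $V(G)$ with $\bar U=V(G)\setminus U$; its cut-set is the set of edges with one endpoint in $U$ and the other in $\bar U$. A tombolo-cut is a cut whose cut-set has exactly $2$ edges. *)

theory Defs
  imports Main
begin

text \<open>A finite loopless multigraph: vertex set V, edge set E (edges are abstract
  objects, so parallel edges are allowed), and an endpoint map assigning to each
  edge a set of exactly two distinct vertices of V.\<close>
definition multigraph :: "'a set \<Rightarrow> 'e set \<Rightarrow> ('e \<Rightarrow> 'a set) \<Rightarrow> bool" where
  "multigraph V E ends \<longleftrightarrow> finite V \<and> finite E \<and>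
     (\<forall>e\<in>E. ends e \<subseteq> V \<and> card (ends e) = 2)"

definition degree :: "'e set \<Rightarrow> ('e \<Rightarrow> 'a set) \<Rightarrow> 'a \<Rightarrow> nat" where
  "degree E ends v = card {e\<in>E. v \<in> ends e}"

definition cubic :: "'a set \<Rightarrow> 'e set \<Rightarrow> ('e \<Rightarrow> 'a set) \<Rightarrow> bool" where
  "cubic V E ends \<longleftrightarrow> (\<forall>v\<in>V. degree E ends v = 3)"

definition adj_in :: "'a set \<Rightarrow> 'e set \<Rightarrow> ('e \<Rightarrow> 'a set) \<Rightarrow> ('a \<times> 'a) set" where
  "adj_in S E ends = {(x, y). x \<in> S \<and> y \<in> S \<and> (\<exists>e\<in>E. ends e = {x, y})}"

definition connected_in :: "'a set \<Rightarrow> 'e set \<Rightarrow> ('e \<Rightarrow> 'a set) \<Rightarrow> bool" where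
  "connected_in S E ends \<longleftrightarrow> S \<noteq> {} \<and> (\<forall>x\<in>S. \<forall>y\<in>S. (x, y) \<in> (adj_in S E ends)\<^sup>*)"

text \<open>2-connected (Diestel): more than 2 vertices and G - X connected whenever |X| < 2.\<close>
definition two_connected :: "'a set \<Rightarrow> 'e set \<Rightarrow> ('e \<Rightarrow> 'a set) \<Rightarrow> bool" where
  "two_connected V E ends \<longleftrightarrow> card V > 2 \<and> connected_in V E ends \<and>
     (\<forall>v\<in>V. connected_in (V - {v}) E ends)"

definition cut_set :: "'a set \<Rightarrow> 'e set \<Rightarrow> ('e \<Rightarrow> 'a set) \<Rightarrow> 'a set \<Rightarrow> 'e set" where
  "cut_set V E ends U = {e\<in>E. ends e \<inter> U \<noteq> {} \<and> ends e \<inter> (V - U) \<noteq> {}}"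

definition tombolo_cut :: "'a set \<Rightarrow> 'e set \<Rightarrow> ('e \<Rightarrow> 'a set) \<Rightarrow> 'a set \<Rightarrow> bool" where
  "tombolo_cut V E ends U \<longleftrightarrow> U \<subseteq> V \<and> card (cut_set V E ends U) = 2"

end

theory Submission
  imports Defs
begin

text \<open>Suppose the two cut edges share an endpoint v. Since v has degree 3, its third edge
  does not cross the cut, so it joins v to a vertex c on the side of v, while the other endpoint
  a of a cut edge lies on the opposite side. As every cut edge contains v, no cut edge survives
  in G - v, so c and a lie on the same side because G - v is connected: a contradiction.\<close>

lemma multigraph_edge_other_end:
  assumes "multigraph V E ends" and "e \<in> E" and "v \<in> ends e"
  obtains w where "ends e = {v, w}" and "w \<noteq> v" and "v \<in> V" and "w \<in> V"
proof -
  from assms(1,2) have "ends e \<subseteq> V" and "card (ends e) = 2"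
    by (auto simp: multigraph_def)
  then obtain x y where "ends e = {x, y}" and "x \<noteq> y"
    by (meson card_2_iff)
  with assms(3) \<open>ends e \<subseteq> V\<close> that show thesis
    by auto
qed

lemma cut_set_edge_iff:
  assumes "e \<in> E" and "ends e = {x, y}" and "x \<in> V" and "y \<in> V"
  shows "e \<in> cut_set V E ends U \<longleftrightarrow> (x \<in> U) \<noteq> (y \<in> U)"
proof -
  have "ends e \<inter> U \<noteq> {} \<longleftrightarrow> x \<in> U \<or> y \<in> U"
    and "ends e \<inter> (V - U) \<noteq> {} \<longleftrightarrow> x \<notin> U \<or> y \<notin> U"
    using assms(2-4) by auto
  with assms(1) show ?thesis
    unfolding cut_set_def by blast
qed

lemma cut_set_eq_if_card_two:
  assumes "finite E" and "card (cut_set V E ends U) = 2"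
    and "e1 \<in> cut_set V E ends U" and "e2 \<in> cut_set V E ends U" and "e1 \<noteq> e2"
  shows "cut_set V E ends U = {e1, e2}"
proof -
  have "finite (cut_set V E ends U)"
    using assms(1) by (simp add: cut_set_def)
  moreover have "card {e1, e2} = card (cut_set V E ends U)"
    using assms(2,5) by simp
  ultimately show ?thesis
    using card_subset_eq assms(3,4) by (metis empty_subsetI insert_subset)
qed

lemma incident_edge_outside:
  assumes "finite F" and "card F < degree E ends v"
  obtains e where "e \<in> E" and "v \<in> ends e" and "e \<notin> F"
proof -
  have "\<not> {e\<in>E. v \<in> ends e} \<subseteq> F"
    using assms card_mono[OF assms(1)] unfolding degree_def by (meson leD)
  with that show thesis
    by blast
qed

lemma rtrancl_adj_in_same_side:
  assumes "S \<subseteq> V" and "\<forall>e\<in>cut_set V E ends U. \<not> ends e \<subseteq> S"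
    and "(x, y) \<in> (adj_in S E ends)\<^sup>*"
  shows "(x \<in> U) \<longleftrightarrow> (y \<in> U)"
  using assms(3)
proof (induction rule: rtrancl_induct)
  case base
  show ?case ..
next
  case (step y z)
  then obtain e where e: "e \<in> E" "ends e = {y, z}" and "y \<in> S" "z \<in> S"
    by (auto simp: adj_in_def)
  with assms(2) have "e \<notin> cut_set V E ends U"
    by auto
  with cut_set_edge_iff[of e E ends y z V U] e \<open>y \<in> S\<close> \<open>z \<in> S\<close> assms(1) step.IH show ?case
    by blast
qed

lemma connected_in_same_side:
  assumes "connected_in S E ends" and "S \<subseteq> V"
    and "\<forall>e\<in>cut_set V E ends U. \<not> ends e \<subseteq> S"
    and "x \<in> S" and "y \<in> S"
  shows "(x \<in> U) \<longleftrightarrow> (y \<in> U)"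
proof -
  have "(x, y) \<in> (adj_in S E ends)\<^sup>*"
    using assms(1,4,5) unfolding connected_in_def by blast
  then show ?thesis
    by (rule rtrancl_adj_in_same_side[OF assms(2,3)])
qed

lemma cut_set_edges_at_cut_vertex:
  assumes "multigraph V E ends" and "connected_in (V - {v}) E ends"
    and "\<forall>e\<in>cut_set V E ends U. v \<in> ends e"
    and "e \<in> E" and "v \<in> ends e" and "f \<in> E" and "v \<in> ends f"
  shows "e \<in> cut_set V E ends U \<longleftrightarrow> f \<in> cut_set V E ends U"
proof -
  obtain a where a: "ends e = {v, a}" "a \<noteq> v" "v \<in> V" "a \<in> V"
    using multigraph_edge_other_end[OF assms(1,4,5)] .
  obtain c where c: "ends f = {v, c}" "c \<noteq> v" "c \<in> V"
    using multigraph_edge_other_end[OF assms(1,6,7)] .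
  have "(a \<in> U) \<longleftrightarrow> (c \<in> U)"
  proof (rule connected_in_same_side[OF assms(2)])
    show "\<forall>e\<in>cut_set V E ends U. \<not> ends e \<subseteq> V - {v}"
      using assms(3) by blast
  qed (use a c in auto)
  then show ?thesis
    using cut_set_edge_iff[of e E ends v a V U] cut_set_edge_iff[of f E ends v c V U]
      assms(4,6) a c by blast
qed

theorem proposition10:
  fixes V :: "'a set" and E :: "'e set" and ends :: "'e \<Rightarrow> 'a set" and U :: "'a set"
  assumes "multigraph V E ends"
    and "cubic V E ends"
    and "two_connected V E ends"
    and "tombolo_cut V E ends U"
  shows "\<forall>e1\<in>cut_set V E ends U. \<forall>e2\<in>cut_set V E ends U.
           e1 \<noteq> e2 \<longrightarrow> ends e1 \<inter> ends e2 = {}"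
proof (intro ballI impI, rule ccontr)
  fix e1 e2
  assume e1: "e1 \<in> cut_set V E ends U" and e2: "e2 \<in> cut_set V E ends U"
    and "e1 \<noteq> e2" and "ends e1 \<inter> ends e2 \<noteq> {}"
  have "finite E" "e1 \<in> E"
    using assms(1) e1 by (simp_all add: multigraph_def cut_set_def)
  have cut: "cut_set V E ends U = {e1, e2}"
    using assms(4) cut_set_eq_if_card_two[OF \<open>finite E\<close> _ e1 e2 \<open>e1 \<noteq> e2\<close>]
    by (simp add: tombolo_cut_def)
  obtain v where "v \<in> ends e1" "v \<in> ends e2"
    using \<open>ends e1 \<inter> ends e2 \<noteq> {}\<close> by blast
  have "v \<in> V"
    using multigraph_edge_other_end[OF assms(1) \<open>e1 \<in> E\<close> \<open>v \<in> ends e1\<close>] by blast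
  have "finite {e1, e2}" and "card {e1, e2} < degree E ends v"
    using assms(2) \<open>v \<in> V\<close> \<open>e1 \<noteq> e2\<close> by (simp_all add: cubic_def)
  then obtain e3 where "e3 \<in> E" "v \<in> ends e3" "e3 \<notin> {e1, e2}"
    by (rule incident_edge_outside)
  moreover have "connected_in (V - {v}) E ends"
    using assms(3) \<open>v \<in> V\<close> by (simp add: two_connected_def)
  moreover have "\<forall>e\<in>cut_set V E ends U. v \<in> ends e"
    using cut \<open>v \<in> ends e1\<close> \<open>v \<in> ends e2\<close> by simp
  ultimately have "e1 \<in> cut_set V E ends U \<longleftrightarrow> e3 \<in> cut_set V E ends U"
    using cut_set_edges_at_cut_vertex[OF assms(1)] \<open>e1 \<in> E\<close> \<open>v \<in> ends e1\<close> by blast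
  with e1 cut \<open>e3 \<notin> {e1, e2}\<close> show False
    by blast
qed

end
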